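(* Let $m\ge1$, let $Dic_m=\langle x,y\mid x^{2m},\,y^2x^m,\,y^{-1}xyx\rangle$ and $G=\mathbb{Z}/2m\mathbb{Z}\times\mathbb{Z}/2\mathbb{Z}=\langle x,y\mid x^{2m},y^2,[x,y]\rangle$. Let \[ P=\sum_{k=0}^{2m-1}\alpha_kx^k+\sum_{k=0}^{2m-1}\beta_k\,yx^k, \] regarded (with the same coefficients and words) both as an element of $\mathbb{C}[Dic_m]$ and of $\mathbb{C}G$, where the coefficients $\alpha_k$ are real and $P$ is reciprocal in both $\mathbb{C}[Dic_m]$ and $\mathbb{C}G$. Let $k=\sum_k(|\alpha_k|+|\beta_k|)$ and $|\lambda|<1/k$. Then \[ m_{G}(P,\lambda)=m_{Dic_m}(P,\lambda). \]
   Context: For a group $\Gamma$ and $Q=\sum_{g\in\Gamma}c_g g\in\mathbb{C}\Gamma$ (finite sum), the reciprocal is $Q^*=\sum_g\overline{c_g}\,g^{-1}$, and $Q$ is reciprocal if $Q=Q^*$. For reciprocal $P\in\mathbb{C}\Gamma$ with $l_1$-norm $k=\sum_g|c_g|$ and $|\lambda|<1/k$, define $m_\Gamma(P,\lambda)=-\sum_{n\ge1}a_n\lambda^n/n$, where $a_n$ is the coefficient of the identity element of $\Gamma$ in $P^n$. *)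

theory Defs
  imports Complex_Main
begin

definition gconv :: "'g set \<Rightarrow> ('g \<Rightarrow> 'g \<Rightarrow> 'g) \<Rightarrow> ('g \<Rightarrow> complex) \<Rightarrow> ('g \<Rightarrow> complex) \<Rightarrow> 'g \<Rightarrow> complex" where
  "gconv S mul f g z = (\<Sum>u\<in>S. \<Sum>v\<in>S. if mul u v = z then f u * g v else 0)"

fun gpow :: "'g set \<Rightarrow> ('g \<Rightarrow> 'g \<Rightarrow> 'g) \<Rightarrow> 'g \<Rightarrow> ('g \<Rightarrow> complex) \<Rightarrow> nat \<Rightarrow> 'g \<Rightarrow> complex" where
  "gpow S mul e f 0 = (\<lambda>z. if z = e then 1 else 0)"
| "gpow S mul e f (Suc n) = gconv S mul f (gpow S mul e f n)"

definition reciprocal :: "'g set \<Rightarrow> ('g \<Rightarrow> 'g) \<Rightarrow> ('g \<Rightarrow> complex) \<Rightarrow> bool" where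
  "reciprocal S ginv f \<longleftrightarrow> (\<forall>g\<in>S. f g = cnj (f (ginv g)))"

definition mGamma :: "'g set \<Rightarrow> ('g \<Rightarrow> 'g \<Rightarrow> 'g) \<Rightarrow> 'g \<Rightarrow> ('g \<Rightarrow> complex) \<Rightarrow> complex \<Rightarrow> complex" where
  "mGamma S mul e f lam = - (\<Sum>n. if n = 0 then 0 else gpow S mul e f n e * lam ^ n / of_nat n)"

text \<open>Both groups have carrier {(a,i). a in {0,1}, 0 <= i < 2m}; the pair (a,i)
  stands for the normal form y^a x^i.\<close>
definition dcarrier :: "nat \<Rightarrow> (int \<times> int) set" where
  "dcarrier m = {0,1} \<times> {0..<2 * int m}"

text \<open>Dic_m: x^{2m}=1, y^2 = x^m, y^{-1} x y = x^{-1} (so x^i y = y x^{-i}).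
  (y^a x^i)(y^b x^j) = y^{a+b} x^{(-1)^b i + j}, and y^2 = x^m.\<close>
definition dic_mul :: "nat \<Rightarrow> int \<times> int \<Rightarrow> int \<times> int \<Rightarrow> int \<times> int" where
  "dic_mul m p q = (case p of (a, i) \<Rightarrow> case q of (b, j) \<Rightarrow>
     ((a + b) mod 2,
      ((if b = 0 then i else - i) + j + (if a = 1 \<and> b = 1 then int m else 0)) mod (2 * int m)))"

definition dic_inv :: "nat \<Rightarrow> int \<times> int \<Rightarrow> int \<times> int" where
  "dic_inv m p = (case p of (a, i) \<Rightarrow>
     if a = 0 then (0, (- i) mod (2 * int m)) else (1, (i - int m) mod (2 * int m)))"

definition ab_mul :: "nat \<Rightarrow> int \<times> int \<Rightarrow> int \<times> int \<Rightarrow> int \<times> int" where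
  "ab_mul m p q = (case p of (a, i) \<Rightarrow> case q of (b, j) \<Rightarrow>
     ((a + b) mod 2, (i + j) mod (2 * int m)))"

definition ab_inv :: "nat \<Rightarrow> int \<times> int \<Rightarrow> int \<times> int" where
  "ab_inv m p = (case p of (a, i) \<Rightarrow> (a, (- i) mod (2 * int m)))"

definition Pelem :: "(nat \<Rightarrow> real) \<Rightarrow> (nat \<Rightarrow> complex) \<Rightarrow> int \<times> int \<Rightarrow> complex" where
  "Pelem \<alpha> \<beta> p = (case p of (a, i) \<Rightarrow>
     if a = 0 then complex_of_real (\<alpha> (nat i)) else if a = 1 then \<beta> (nat i) else 0)"

end

theory Submission
  imports Defs
begin

text \<open>Left multiplication by P is the same operator in both group algebras. For a right
  factor v = x^j the Dicyclic and abelian products with v coincide. For v = y x^j, the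
  bijection x^i \<mapsto> x^(-i), y x^i \<mapsto> y x^(m-i) of the carrier turns Dicyclic products
  with v into abelian ones, and P is invariant under it: alpha_(-i) = alpha_i by reciprocity in G
  because the alpha_k are real, and beta_(m-i) = cnj beta_(-i) = beta_i by combining both
  reciprocity conditions. Hence all powers P^n agree, and so do the coefficient sequences
  defining m_G and m_Dic.\<close>

lemma gconv_eq_by_twist:
  assumes "\<And>v. v \<in> S \<Longrightarrow> bij_betw (\<tau> v) S S"
    and "\<And>u v. u \<in> S \<Longrightarrow> v \<in> S \<Longrightarrow> mul' (\<tau> v u) v = mul u v"
    and "\<And>u v. u \<in> S \<Longrightarrow> v \<in> S \<Longrightarrow> f (\<tau> v u) = f u"
  shows "gconv S mul' f g = gconv S mul f g"
proof
  fix z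
  have inner: "(\<Sum>u\<in>S. if mul' u v = z then f u * g v else 0)
      = (\<Sum>u\<in>S. if mul u v = z then f u * g v else 0)" if v: "v \<in> S" for v
  proof -
    have "(\<Sum>u\<in>S. if mul' u v = z then f u * g v else 0)
        = (\<Sum>u\<in>S. if mul' (\<tau> v u) v = z then f (\<tau> v u) * g v else 0)"
      by (rule sum.reindex_bij_betw[OF assms(1)[OF v], symmetric])
    also have "\<dots> = (\<Sum>u\<in>S. if mul u v = z then f u * g v else 0)"
      using assms(2,3) v by (intro sum.cong) simp_all
    finally show ?thesis .
  qed
  have "gconv S mul' f g z = (\<Sum>v\<in>S. \<Sum>u\<in>S. if mul' u v = z then f u * g v else 0)"
    unfolding gconv_def by (rule sum.swap)
  also have "\<dots> = (\<Sum>v\<in>S. \<Sum>u\<in>S. if mul u v = z then f u * g v else 0)"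
    by (rule sum.cong[OF refl inner])
  also have "\<dots> = gconv S mul f g z"
    unfolding gconv_def by (rule sum.swap[symmetric])
  finally show "gconv S mul' f g z = gconv S mul f g z" .
qed

lemma gpow_eq_if_gconv_eq:
  assumes "\<And>g. gconv S mul f g = gconv S mul' f g"
  shows "gpow S mul e f n = gpow S mul' e f n"
  by (induction n) (simp_all add: assms)

lemma mGamma_eq_if_gconv_eq:
  assumes "\<And>g. gconv S mul f g = gconv S mul' f g"
  shows "mGamma S mul e f lam = mGamma S mul' e f lam"
  unfolding mGamma_def gpow_eq_if_gconv_eq[of S mul f mul', OF assms] ..

definition dic_twist :: "nat \<Rightarrow> int \<times> int \<Rightarrow> int \<times> int" where
  "dic_twist m p = (case p of (a, i) \<Rightarrow>
     if a = 0 then (0, (- i) mod (2 * int m)) else (1, (int m - i) mod (2 * int m)))"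

lemma dic_twist_in_dcarrier:
  assumes "u \<in> dcarrier m"
  shows "dic_twist m u \<in> dcarrier m"
  using assms by (auto simp: dic_twist_def dcarrier_def)

lemma dic_twist_twist:
  assumes "u \<in> dcarrier m"
  shows "dic_twist m (dic_twist m u) = u"
  using assms by (auto simp: dic_twist_def dcarrier_def mod_minus_eq mod_diff_right_eq)

lemma bij_betw_dic_twist: "bij_betw (dic_twist m) (dcarrier m) (dcarrier m)"
  by (rule bij_betw_byWitness[where f' = "dic_twist m"])
    (auto simp: dic_twist_twist dic_twist_in_dcarrier)

lemma dic_mul_eq_ab_mul:
  assumes "v \<in> dcarrier m" "fst v = 0"
  shows "dic_mul m u v = ab_mul m u v"
  using assms by (cases u) (auto simp: dic_mul_def ab_mul_def dcarrier_def)

lemma dic_mul_twist_eq_ab_mul: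
  assumes "u \<in> dcarrier m" "v \<in> dcarrier m" "fst v \<noteq> 0"
  shows "dic_mul m (dic_twist m u) v = ab_mul m u v"
  using assms
  by (auto simp: dic_twist_def dic_mul_def ab_mul_def dcarrier_def
    diff_add_eq mod_diff_right_eq add.commute)

lemma Pelem_dic_twist:
  assumes dic: "reciprocal (dcarrier m) (dic_inv m) (Pelem \<alpha> \<beta>)"
    and ab: "reciprocal (dcarrier m) (ab_inv m) (Pelem \<alpha> \<beta>)"
    and u: "u \<in> dcarrier m"
  shows "Pelem \<alpha> \<beta> (dic_twist m u) = Pelem \<alpha> \<beta> u"
proof -
  obtain a i where u_eq: "u = (a, i)" and a: "a = 0 \<or> a = 1" and i: "0 \<le> i" "i < 2 * int m"
    using u by (auto simp: dcarrier_def)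
  have ab_at: "Pelem \<alpha> \<beta> (b, i) = cnj (Pelem \<alpha> \<beta> (b, (- i) mod (2 * int m)))"
    if "(b, i) \<in> dcarrier m" for b
    using ab that unfolding reciprocal_def ab_inv_def by fastforce
  show ?thesis
  proof (cases "a = 0")
    case True
    have "(0, i) \<in> dcarrier m" using u True u_eq by simp
    from ab_at[OF this] show ?thesis
      by (simp add: u_eq True dic_twist_def Pelem_def)
  next
    case False
    define i' where "i' = (int m - i) mod (2 * int m)"
    have "(1, i') \<in> dcarrier m"
      using i by (simp add: i'_def dcarrier_def)
    with dic have "Pelem \<alpha> \<beta> (1, i') = cnj (Pelem \<alpha> \<beta> (dic_inv m (1, i')))"
      unfolding reciprocal_def by blast
    also have "dic_inv m (1, i') = (1, (- i) mod (2 * int m))"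
      by (simp add: dic_inv_def i'_def mod_diff_left_eq)
    finally have "Pelem \<alpha> \<beta> (1, i') = cnj (Pelem \<alpha> \<beta> (1, (- i) mod (2 * int m)))" .
    moreover have "(1, i) \<in> dcarrier m" using u False a u_eq by simp
    ultimately show ?thesis
      using False a ab_at by (simp add: u_eq dic_twist_def i'_def)
  qed
qed

lemma gconv_dic_eq_gconv_ab:
  assumes "reciprocal (dcarrier m) (dic_inv m) (Pelem \<alpha> \<beta>)"
    and "reciprocal (dcarrier m) (ab_inv m) (Pelem \<alpha> \<beta>)"
  shows "gconv (dcarrier m) (dic_mul m) (Pelem \<alpha> \<beta>) g
       = gconv (dcarrier m) (ab_mul m) (Pelem \<alpha> \<beta>) g"
proof (rule gconv_eq_by_twist[where \<tau> = "\<lambda>v. if fst v = 0 then id else dic_twist m"])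
  show "bij_betw (if fst v = 0 then id else dic_twist m) (dcarrier m) (dcarrier m)" for v
    by (simp add: bij_betw_dic_twist)
  show "dic_mul m ((if fst v = 0 then id else dic_twist m) u) v = ab_mul m u v"
    if "u \<in> dcarrier m" "v \<in> dcarrier m" for u v
    using that by (simp add: dic_mul_eq_ab_mul dic_mul_twist_eq_ab_mul)
  show "Pelem \<alpha> \<beta> ((if fst v = 0 then id else dic_twist m) u) = Pelem \<alpha> \<beta> u"
    if "u \<in> dcarrier m" for u v
    using that Pelem_dic_twist[OF assms] by simp
qed

theorem theorem8p1:
  fixes m :: nat and \<alpha> :: "nat \<Rightarrow> real" and \<beta> :: "nat \<Rightarrow> complex" and lam :: complex
  assumes "m \<ge> 1"
    and "reciprocal (dcarrier m) (dic_inv m) (Pelem \<alpha> \<beta>)"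
    and "reciprocal (dcarrier m) (ab_inv m) (Pelem \<alpha> \<beta>)"
    and "norm lam * (\<Sum>k<2 * m. \<bar>\<alpha> k\<bar> + norm (\<beta> k)) < 1"
  shows "mGamma (dcarrier m) (ab_mul m) (0, 0) (Pelem \<alpha> \<beta>) lam
       = mGamma (dcarrier m) (dic_mul m) (0, 0) (Pelem \<alpha> \<beta>) lam"
  by (rule mGamma_eq_if_gconv_eq) (simp add: gconv_dic_eq_gconv_ab[OF assms(2,3)])

end
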